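(* Let $M=\mathbb H^3/\Gamma$ be a complete orientable hyperbolic $3$-manifold of finite volume with at least one cusp, with cusp cross-sections normalized as in the context. Then every intercusp parameter $w(H_i,H_j)$ (for distinct horospheres $H_i\neq H_j$ lifting cusp cross-sections) and every translation parameter $u(H_i,H_j,H_k)$ (for lifted horospheres with $H_i\neq H_j\neq H_k$) lies in the invariant trace field $k(M)$.
   Context: $\Gamma\subset\operatorname{PSL}_2(\mathbb C)$ is the image of a discrete faithful representation of $\pi_1(M)$, acting on upper half space $\mathbb H^3=\mathbb C\times\mathbb R_+$. The invariant trace field $k(M)$ is the field generated over $\mathbb Q$ by the traces (defined up to sign) of the elements of the subgroup $\Gamma^2=\langle\gamma^2\mid\gamma\in\Gamma\rangle$. For each cusp of $M$ an essential simple closed curve (the meridian) in a horospherical torus cross-section is chosen, and the horospherical torus cross-section of each cusp is chosen so that the geodesic meridian curve on it has Euclidean length $1$. "Horospheres" $H_i$ always mean horospheres in $\mathbb H^3$ that are lifts of these cross-sections; $P_i\in\mathbb C\cup\{\infty\}$ denotes the point of tangency (center) of $H_i$. Each such horosphere carries an affine complex coordinate, determined up to translation, in which the meridional translation corresponds to the real number $1$. For distinct horospheres $H_1,H_2$, let $\gamma(H_1,H_2)$ be the shortest geodesic arc joining them, of length $d$; parallel translating along it and then rotating by an angle $\theta$ in $H_2$ takes the meridional direction of $H_1$ to the meridional direction of $H_2$. The intercusp parameter is $w(H_1,H_2)=e^{-(d+i\theta)}$. For horospheres $H_1\neq H_2\neq H_3$, let $N$ and $M'$ be the points where $H_2$ meets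 the geodesics $P_1P_2$ and $P_2P_3$ respectively; the translation parameter $u(H_1,H_2,H_3)$ is the complex number (in the affine coordinate of $H_2$) of the translation of $H_2$ taking $N$ to $M'$. *)

theory Defs
  imports "HOL-Analysis.Analysis"
begin

section \<open>2x2 complex matrices (lifts of elements of PSL(2,C))\<close>

datatype cmat = Mat (m11: complex) (m12: complex) (m21: complex) (m22: complex)

definition mmul :: "cmat \<Rightarrow> cmat \<Rightarrow> cmat" where
  "mmul A B = Mat (m11 A * m11 B + m12 A * m21 B) (m11 A * m12 B + m12 A * m22 B)
                  (m21 A * m11 B + m22 A * m21 B) (m21 A * m12 B + m22 A * m22 B)"

definition mid :: cmat where "mid = Mat 1 0 0 1"

definition mneg :: "cmat \<Rightarrow> cmat" where
  "mneg A = Mat (- m11 A) (- m12 A) (- m21 A) (- m22 A)"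

definition mdet :: "cmat \<Rightarrow> complex" where
  "mdet A = m11 A * m22 A - m12 A * m21 A"

text \<open>Adjugate; this is the inverse of a matrix of determinant 1.\<close>
definition madj :: "cmat \<Rightarrow> cmat" where
  "madj A = Mat (m22 A) (- m12 A) (- m21 A) (m11 A)"

definition mtrace :: "cmat \<Rightarrow> complex" where
  "mtrace A = m11 A + m22 A"

fun mpow :: "cmat \<Rightarrow> nat \<Rightarrow> cmat" where
  "mpow A 0 = mid"
| "mpow A (Suc n) = mmul A (mpow A n)"

definition mdist :: "cmat \<Rightarrow> cmat \<Rightarrow> real" where
  "mdist A B = sqrt ((cmod (m11 A - m11 B))\<^sup>2 + (cmod (m12 A - m12 B))\<^sup>2
                   + (cmod (m21 A - m21 B))\<^sup>2 + (cmod (m22 A - m22 B))\<^sup>2)"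

section \<open>Upper half space H^3 = C x R_+ and the action of PSL(2,C)\<close>

definition H3 :: "(complex \<times> real) set" where
  "H3 = {p. snd p > 0}"

text \<open>Poincare extension of the Moebius transformation of A to upper half space.\<close>
definition act :: "cmat \<Rightarrow> complex \<times> real \<Rightarrow> complex \<times> real" where
  "act A p = (let z = fst p; t = snd p; a = m11 A; b = m12 A; c = m21 A; d = m22 A;
              den = (cmod (c * z + d))\<^sup>2 + (cmod c)\<^sup>2 * t\<^sup>2
     in (((a * z + b) * cnj (c * z + d) + a * cnj c * complex_of_real (t\<^sup>2)) / complex_of_real den,
         t / den))"

text \<open>Action on the sphere at infinity C \<union> {\<infinity>}; None represents \<infinity>.\<close>
fun moeb :: "cmat \<Rightarrow> complex option \<Rightarrow> complex option" where
  "moeb A None = (if m21 A = 0 then None else Some (m11 A / m21 A))"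
| "moeb A (Some z) = (if m21 A * z + m22 A = 0 then None
                      else Some ((m11 A * z + m12 A) / (m21 A * z + m22 A)))"

definition hyp_vol :: "(complex \<times> real) set \<Rightarrow> ennreal" where
  "hyp_vol F = set_nn_integral lborel F (\<lambda>p. ennreal (1 / (snd p) ^ 3))"

definition geod :: "complex option \<Rightarrow> complex option \<Rightarrow> (complex \<times> real) set" where
  "geod p q = (case (p, q) of
      (None, Some b) \<Rightarrow> {x. snd x > 0 \<and> fst x = b}
    | (Some a, None) \<Rightarrow> {x. snd x > 0 \<and> fst x = a}
    | (Some a, Some b) \<Rightarrow> {x. snd x > 0 \<and> fst x \<in> closed_segment a b \<and>
                              (cmod (fst x - (a + b) / 2))\<^sup>2 + (snd x)\<^sup>2 = (cmod (a - b) / 2)\<^sup>2}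
    | _ \<Rightarrow> {})"

definition parabolic :: "cmat \<Rightarrow> bool" where
  "parabolic A \<longleftrightarrow> A \<noteq> mid \<and> A \<noteq> mneg mid \<and> (mtrace A)\<^sup>2 = 4"

text \<open>Gamma is given by its full preimage in SL(2,C) (closed under negation).
  M = H^3/Gamma is a complete orientable hyperbolic 3-manifold of finite volume with
  at least one cusp iff Gamma is a discrete, torsion-free subgroup of PSL(2,C) of finite
  covolume containing a parabolic element.\<close>
definition cusped_finvol_kleinian :: "cmat set \<Rightarrow> bool" where
  "cusped_finvol_kleinian \<Gamma> \<longleftrightarrow>
     (\<forall>A\<in>\<Gamma>. mdet A = 1) \<and> mid \<in> \<Gamma> \<and>
     (\<forall>A\<in>\<Gamma>. \<forall>B\<in>\<Gamma>. mmul A B \<in> \<Gamma>) \<and>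
     (\<forall>A\<in>\<Gamma>. madj A \<in> \<Gamma>) \<and> (\<forall>A\<in>\<Gamma>. mneg A \<in> \<Gamma>) \<and>
     \<comment> \<open>discrete\<close>
     (\<exists>\<epsilon>>0. \<forall>A\<in>\<Gamma>. mdist A mid < \<epsilon> \<longrightarrow> A = mid) \<and>
     \<comment> \<open>torsion-free in PSL(2,C), so H^3/Gamma is a manifold\<close>
     (\<forall>A\<in>\<Gamma>. \<forall>n>0. (mpow A n = mid \<or> mpow A n = mneg mid) \<longrightarrow> (A = mid \<or> A = mneg mid)) \<and>
     \<comment> \<open>finite volume: a measurable set of finite hyperbolic volume whose translates cover H^3\<close>
     (\<exists>F. F \<in> sets lborel \<and> F \<subseteq> H3 \<and> (\<Union>A\<in>\<Gamma>. act A ` F) = H3 \<and> hyp_vol F < \<infinity>) \<and>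
     \<comment> \<open>at least one cusp\<close>
     (\<exists>A\<in>\<Gamma>. parabolic A)"

text \<open>Parabolic fixed points = centres of lifted cusp horospheres.\<close>
definition parab_pts :: "cmat set \<Rightarrow> complex option set" where
  "parab_pts \<Gamma> = {p. \<exists>A\<in>\<Gamma>. parabolic A \<and> moeb A p = p}"

text \<open>A primitive element (essential simple closed curve on the cusp torus).\<close>
definition primitive_in :: "cmat set \<Rightarrow> cmat \<Rightarrow> bool" where
  "primitive_in \<Gamma> m \<longleftrightarrow> \<not> (\<exists>n\<in>\<Gamma>. \<exists>k\<ge>2. mpow n k = m \<or> mpow n k = mneg m)"

text \<open>A horosphere with an affine complex coordinate is described by g in SL(2,C):
  the horosphere is g({t = 1}), its centre is g(\<infinity>), and its coordinate is
  zeta \<mapsto> g(zeta, 1) (an isometry from the Euclidean plane onto the horosphere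
  with its induced metric).\<close>
definition coord :: "cmat \<Rightarrow> complex \<Rightarrow> complex \<times> real" where
  "coord g \<zeta> = act g (\<zeta>, 1)"

definition horo :: "cmat \<Rightarrow> (complex \<times> real) set" where
  "horo g = range (coord g)"

text \<open>Normalized lifted cusp cross-sections: g p is the framed horosphere centred at
  the parabolic fixed point p.  In its coordinate the meridian (a primitive element of
  Gamma) acts as translation by the real number 1 (so the meridian has length 1), and
  the family is Gamma-equivariant (lifts of the cross-sections, coordinates determined
  up to translation).\<close>
definition cusp_normalization :: "cmat set \<Rightarrow> (complex option \<Rightarrow> cmat) \<Rightarrow> bool" where
  "cusp_normalization \<Gamma> g \<longleftrightarrow>
     (\<forall>p\<in>parab_pts \<Gamma>.
        mdet (g p) = 1 \<and> moeb (g p) None = p \<and>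
        (\<exists>m\<in>\<Gamma>. primitive_in \<Gamma> m \<and> (\<forall>\<zeta>. act m (coord (g p) \<zeta>) = coord (g p) (\<zeta> + 1))) \<and>
        (\<forall>\<gamma>\<in>\<Gamma>. \<exists>b. \<forall>\<zeta>. coord (g (moeb \<gamma> p)) \<zeta> = act \<gamma> (coord (g p) (\<zeta> + b))))"

text \<open>We move H1 to the standard horosphere {t = 1} with
  its standard coordinate by the isometry (g p1)^{-1}; then H2 becomes horo h with
  h = (g p1)^{-1} (g p2), centred at a finite point.  The shortest arc is the vertical
  segment from height 1 to the top point T of horo h, of (signed) length d = - ln (height T).
  Parallel translation along it preserves the Euclidean horizontal direction 1 (the
  meridional direction of H1).  In the coordinate of H2 this transported vector is v,
  where L v = 1 and L is the derivative at T of the horizontal part of H2's coordinate map.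
  Rotating by theta (in H2's coordinate) takes v to the meridional direction 1, i.e.
  theta = - Arg v.\<close>
definition intercusp :: "(complex option \<Rightarrow> cmat) \<Rightarrow> complex option \<Rightarrow> complex option \<Rightarrow> complex" where
  "intercusp g p1 p2 =
     (let h = mmul (madj (g p1)) (g p2);
          T = (THE x. x \<in> horo h \<and> (\<forall>y\<in>horo h. snd y \<le> snd x));
          \<zeta>0 = (THE \<zeta>. coord h \<zeta> = T);
          L = frechet_derivative (\<lambda>\<zeta>. fst (coord h \<zeta>)) (at \<zeta>0);
          v = (THE v. L v = 1);
          d = - ln (snd T);
          \<theta> = - Arg v
      in exp (- (complex_of_real d + \<i> * complex_of_real \<theta>)))"

definition transl :: "(complex option \<Rightarrow> cmat) \<Rightarrow> complex option \<Rightarrow> complex option \<Rightarrow> complex option \<Rightarrow> complex" where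
  "transl g p1 p2 p3 =
     (let N = (THE x. x \<in> horo (g p2) \<inter> geod p1 p2);
          M' = (THE x. x \<in> horo (g p2) \<inter> geod p2 p3)
      in (THE \<zeta>. coord (g p2) \<zeta> = M') - (THE \<zeta>. coord (g p2) \<zeta> = N))"

inductive_set sq_subgroup :: "cmat set \<Rightarrow> cmat set" for \<Gamma> where
  sq: "A \<in> \<Gamma> \<Longrightarrow> mmul A A \<in> sq_subgroup \<Gamma>"
| one: "mid \<in> sq_subgroup \<Gamma>"
| mult: "A \<in> sq_subgroup \<Gamma> \<Longrightarrow> B \<in> sq_subgroup \<Gamma> \<Longrightarrow> mmul A B \<in> sq_subgroup \<Gamma>"
| inv: "A \<in> sq_subgroup \<Gamma> \<Longrightarrow> madj A \<in> sq_subgroup \<Gamma>"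

definition is_subfield :: "complex set \<Rightarrow> bool" where
  "is_subfield F \<longleftrightarrow> 0 \<in> F \<and> 1 \<in> F \<and>
     (\<forall>x\<in>F. \<forall>y\<in>F. x + y \<in> F \<and> x * y \<in> F) \<and> (\<forall>x\<in>F. - x \<in> F) \<and>
     (\<forall>x\<in>F. x \<noteq> 0 \<longrightarrow> inverse x \<in> F)"

text \<open>k(M): the subfield of C generated over Q by the traces of elements of Gamma^2
  (sign ambiguity is irrelevant since fields are closed under negation).\<close>
definition inv_trace_field :: "cmat set \<Rightarrow> complex set" where
  "inv_trace_field \<Gamma> = \<Inter> {F. is_subfield F \<and> (\<forall>A\<in>sq_subgroup \<Gamma>. mtrace A \<in> F)}"

end

theory Submission
  imports Defs
begin

text \<open>
  Normalize two cusps by g1 and g2 and put h = g1\<inverse> g2 = [a b; c d].  Both parameters are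
  read off from h: the intercusp parameter is w = -1/c^2, and the translation parameter
  relative to the neighbours h1 = g2\<inverse> g1, h3 = g2\<inverse> g3 is u = a3/c3 - a1/c1.  On the other
  hand the square of a normalized meridian is the conjugate g T g\<inverse> of T = [1 2; 0 1], so it
  lies in \<Gamma>^2, and traces of products of two or three such squares are polynomials in the
  entries of h.  Explicitly tr(M1 M2) = 2 - 4 c^2, and a combination of traces of
  products of M1, M2, M3 equals 8 c1 c3 (a3 c1 - a1 c3); dividing by 8 c1^2 c3^2 gives u.
\<close>

lemma cmat_eq_iff: "A = B \<longleftrightarrow> m11 A = m11 B \<and> m12 A = m12 B \<and> m21 A = m21 B \<and> m22 A = m22 B"
  by (cases A; cases B) auto

lemma mmul_assoc: "mmul (mmul A B) C = mmul A (mmul B C)"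
  by (simp add: mmul_def cmat_eq_iff algebra_simps)

lemma mmul_mid [simp]: "mmul mid A = A" "mmul A mid = A"
  by (simp_all add: mmul_def mid_def cmat_eq_iff)

lemma mdet_mmul: "mdet (mmul A B) = mdet A * mdet B"
  by (simp add: mmul_def mdet_def algebra_simps)

lemma mdet_madj: "mdet (madj A) = mdet A"
  by (simp add: madj_def mdet_def algebra_simps)

lemma mmul_madj_cancel: "mdet A = 1 \<Longrightarrow> mmul A (madj A) = mid"
  by (simp add: mmul_def madj_def mid_def mdet_def cmat_eq_iff algebra_simps)

lemma madj_mmul_cancel: "mdet A = 1 \<Longrightarrow> mmul (madj A) A = mid"
  by (simp add: mmul_def madj_def mid_def mdet_def cmat_eq_iff algebra_simps)

lemma madj_mmul: "madj (mmul A B) = mmul (madj B) (madj A)"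
  by (simp add: madj_def mmul_def cmat_eq_iff algebra_simps)

lemma mmul_madj_left_eq: "mdet A = 1 \<Longrightarrow> mmul A (mmul (madj A) B) = B"
  by (simp add: mmul_assoc[symmetric] mmul_madj_cancel)

lemma mtrace_mmul_commute: "mtrace (mmul A B) = mtrace (mmul B A)"
  by (simp add: mmul_def mtrace_def algebra_simps)

definition conjm :: "cmat \<Rightarrow> cmat \<Rightarrow> cmat" where
  "conjm g Y = mmul (mmul g Y) (madj g)"

lemma conjm_mmul: "mdet g = 1 \<Longrightarrow> mmul (conjm g Y) (conjm g Z) = conjm g (mmul Y Z)"
  unfolding conjm_def by (simp add: mmul_assoc) (simp add: mmul_assoc[symmetric] madj_mmul_cancel)

lemma mtrace_conjm: "mdet g = 1 \<Longrightarrow> mtrace (conjm g Y) = mtrace Y"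
  unfolding conjm_def by (simp add: mtrace_mmul_commute[of "mmul g Y"] mmul_assoc[symmetric] madj_mmul_cancel)

lemma conjm_conjm: "conjm (mmul g h) Y = conjm g (conjm h Y)"
  unfolding conjm_def by (simp add: madj_mmul mmul_assoc)

lemma of_real_cmod_power2: "(complex_of_real (cmod z))\<^sup>2 = z * cnj z"
  using complex_norm_square[of z] by (simp add: power2_eq_square)

lemma of_real_cmod_mult_self: "complex_of_real (cmod z) * complex_of_real (cmod z) = z * cnj z"
  using of_real_cmod_power2[of z] by (simp add: power2_eq_square)

subsection \<open>The action on upper half space\<close>

definition mstar :: "cmat \<Rightarrow> cmat" where
  "mstar A = Mat (cnj (m11 A)) (cnj (m21 A)) (cnj (m12 A)) (cnj (m22 A))"

lemma mstar_mmul: "mstar (mmul A B) = mmul (mstar B) (mstar A)"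
  by (simp add: mstar_def mmul_def cmat_eq_iff algebra_simps)

text \<open>
  The point (z, t) corresponds to the positive Hermitian matrix
  (1/t) [|z|^2 + t^2, z; cnj z, 1], and the Poincare extension of A becomes H \<mapsto> A H A^*.
  This is what makes act a group action without any geometry.
\<close>

definition herm :: "complex \<times> real \<Rightarrow> cmat" where
  "herm p = Mat (complex_of_real (((cmod (fst p))\<^sup>2 + (snd p)\<^sup>2) / snd p)) (fst p / complex_of_real (snd p))
                (cnj (fst p) / complex_of_real (snd p)) (complex_of_real (1 / snd p))"

lemma herm_inj:
  assumes p: "snd p > 0" and q: "snd q > 0" and h: "herm p = herm q"
  shows "p = q"
proof -
  have "m22 (herm p) = m22 (herm q)" using h by simp
  then have t: "snd p = snd q" using p q by (simp add: herm_def field_simps)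
  have "m12 (herm p) = m12 (herm q)" using h by simp
  then have "fst p / complex_of_real (snd p) = fst q / complex_of_real (snd q)"
    by (simp only: herm_def cmat.sel)
  then have "fst p = fst q" unfolding t using q by (simp add: divide_cancel_right)
  with t show ?thesis by (simp add: prod_eq_iff)
qed

lemma act_denominator_pos:
  assumes "mdet A = 1" "t > 0"
  shows "(cmod (m21 A * z + m22 A))\<^sup>2 + (cmod (m21 A))\<^sup>2 * t\<^sup>2 > 0"
proof (cases "m21 A = 0")
  case True
  then have "m22 A \<noteq> 0" using assms by (auto simp: mdet_def)
  then show ?thesis using True by simp
next
  case False
  then have "(cmod (m21 A))\<^sup>2 * t\<^sup>2 > 0" using assms by simp
  then show ?thesis by (intro add_nonneg_pos) simp_all
qed

lemma snd_act_pos: "mdet A = 1 \<Longrightarrow> snd p > 0 \<Longrightarrow> snd (act A p) > 0"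
  using act_denominator_pos[of A "snd p" "fst p"] by (simp add: act_def Let_def)

lemma herm_act_Mat:
  fixes a b c d z :: complex and t :: real
  assumes det: "a * d - b * c = 1" and t: "t > 0"
  defines "u \<equiv> c * z + d"
  defines "D \<equiv> (cmod u)\<^sup>2 + (cmod c)\<^sup>2 * t\<^sup>2"
  defines "N \<equiv> (a * z + b) * cnj u + a * cnj c * complex_of_real (t\<^sup>2)"
  shows "herm (N / complex_of_real D, t / D) = mmul (mmul (Mat a b c d) (herm (z, t))) (mstar (Mat a b c d))"
proof -
  have Dpos: "D > 0"
    using act_denominator_pos[of "Mat a b c d" t z] det t by (simp add: mdet_def D_def u_def)
  have cdet: "cnj a * cnj d - cnj b * cnj c = 1" using arg_cong[OF det, of cnj] by simp
  have Dc: "complex_of_real D = u * cnj u + c * cnj c * (complex_of_real t)^2"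
    by (simp add: D_def complex_norm_square[symmetric])
  let ?T = "complex_of_real t"
  let ?H11 = "complex_of_real (((cmod z)\<^sup>2 + t\<^sup>2) / t)" and ?H22 = "complex_of_real (1/t)"
  have T0: "?T \<noteq> 0" using t by simp
  have D0: "complex_of_real D \<noteq> 0" using Dpos by simp
  have e22: "complex_of_real (1 / (t / D)) = (c * ?H11 + d * (cnj z / ?T)) * cnj c + (c * (z / ?T) + d * ?H22) * cnj d"
  proof -
    have "complex_of_real (1 / (t / D)) = (u * cnj u + c * cnj c * ?T^2) / ?T" using Dc by simp
    then show ?thesis using T0 unfolding u_def by (simp add: field_simps of_real_cmod_power2 of_real_cmod_mult_self)
  qed
  have e12: "N / complex_of_real D / complex_of_real (t / D) = (a * ?H11 + b * (cnj z / ?T)) * cnj c + (a * (z / ?T) + b * ?H22) * cnj d"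
    using T0 D0 unfolding N_def u_def by (simp add: field_simps of_real_cmod_power2 of_real_cmod_mult_self)
  have e21: "cnj (N / complex_of_real D) / complex_of_real (t / D) = (c * ?H11 + d * (cnj z / ?T)) * cnj a + (c * (z / ?T) + d * ?H22) * cnj b"
    using T0 D0 unfolding N_def u_def by (simp add: field_simps of_real_cmod_power2 of_real_cmod_mult_self)
  have key: "N * cnj N + ?T^2 = complex_of_real D * ((a*z+b) * cnj (a*z+b) + a * cnj a * ?T^2)"
    unfolding Dc N_def u_def using det cdet by simp algebra
  have e11: "complex_of_real (((cmod (N / complex_of_real D))\<^sup>2 + (t / D)\<^sup>2) / (t / D)) = (a * ?H11 + b * (cnj z / ?T)) * cnj a + (a * (z / ?T) + b * ?H22) * cnj b"
  proof -
    have "complex_of_real (((cmod (N / complex_of_real D))\<^sup>2 + (t / D)\<^sup>2) / (t / D)) = (N * cnj N + ?T^2) / (complex_of_real D * ?T)"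
      using T0 D0 by (simp add: field_simps of_real_cmod_power2 of_real_cmod_mult_self power2_eq_square)
    also have "\<dots> = ((a*z+b) * cnj (a*z+b) + a * cnj a * ?T^2) / ?T" unfolding key using D0 by simp
    finally show ?thesis using T0 by (simp add: field_simps of_real_cmod_power2 of_real_cmod_mult_self)
  qed
  show ?thesis unfolding herm_def mmul_def mstar_def
    using e11 e12 e21 e22 by (simp del: of_real_divide)
qed

lemma herm_act: "mdet A = 1 \<Longrightarrow> snd p > 0 \<Longrightarrow> herm (act A p) = mmul (mmul A (herm p)) (mstar A)"
  using herm_act_Mat[of "m11 A" "m22 A" "m12 A" "m21 A" "snd p" "fst p"]
  by (cases A; cases p) (simp add: act_def Let_def mdet_def)

lemma act_mmul: "mdet A = 1 \<Longrightarrow> mdet B = 1 \<Longrightarrow> snd p > 0 \<Longrightarrow> act (mmul A B) p = act A (act B p)"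
  by (rule herm_inj) (simp_all add: snd_act_pos mdet_mmul herm_act mstar_mmul mmul_assoc)

lemma act_mid [simp]: "act mid p = p"
  by (simp add: act_def mid_def Let_def)

lemma act_madj_act: "mdet g = 1 \<Longrightarrow> snd p > 0 \<Longrightarrow> act (madj g) (act g p) = p"
  by (simp add: act_mmul[symmetric] madj_mmul_cancel mdet_madj)

lemma act_inj: "mdet g = 1 \<Longrightarrow> snd p > 0 \<Longrightarrow> snd q > 0 \<Longrightarrow> act g p = act g q \<Longrightarrow> p = q"
  by (metis act_madj_act)

lemma coord_inj: "mdet g = 1 \<Longrightarrow> coord g z = coord g w \<Longrightarrow> z = w"
  using act_inj[of g "(z, 1)" "(w, 1)"] by (simp add: coord_def)

lemma the_coord_eq: "mdet g = 1 \<Longrightarrow> (THE \<zeta>. coord g \<zeta> = coord g z) = z"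
  by (rule the_equality) (auto dest: coord_inj)

lemma moeb_mmul_Mat:
  fixes a b c d a' b' c' d' :: complex
  assumes dA: "a * d - b * c = 1" and dB: "a' * d' - b' * c' = 1"
  shows "moeb (Mat (a * a' + b * c') (a * b' + b * d') (c * a' + d * c') (c * b' + d * d')) p
       = moeb (Mat a b c d) (moeb (Mat a' b' c' d') p)"
proof (cases p)
  case None
  show ?thesis
  proof (cases "c' = 0")
    case True
    then have "a' \<noteq> 0" using dB by auto
    then show ?thesis using None True by simp
  next
    case False
    have e: "c * a' + d * c' = c' * (c * (a' / c') + d)" "a * a' + b * c' = c' * (a * (a' / c') + b)"
      using False by (simp_all add: field_simps)
    show ?thesis using None False by (simp only: moeb.simps cmat.sel e) (simp add: False)
  qed
next
  case (Some z)
  show ?thesis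
  proof (cases "c' * z + d' = 0")
    case True
    have "(a' * z + b') * c' - a' * (c' * z + d') = - 1" using dB by (simp add: algebra_simps)
    then have nz: "a' * z + b' \<noteq> 0" using True by auto
    have e: "(c * a' + d * c') * z + (c * b' + d * d') = c * (a' * z + b')"
            "(a * a' + b * c') * z + (a * b' + b * d') = a * (a' * z + b')"
      using True by (simp_all add: algebra_simps)
        (metis add.commute distrib_left mult.assoc mult.commute mult_zero_right)+
    show ?thesis using Some True nz by (simp add: e)
  next
    case False
    let ?x = "(a' * z + b') / (c' * z + d')"
    have e: "(c * a' + d * c') * z + (c * b' + d * d') = (c' * z + d') * (c * ?x + d)"
            "(a * a' + b * c') * z + (a * b' + b * d') = (c' * z + d') * (a * ?x + b)"
      using False by (simp_all add: field_simps)
    show ?thesis using Some False by (simp only: moeb.simps cmat.sel e) (simp add: False)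
  qed
qed

lemma moeb_mmul: "mdet A = 1 \<Longrightarrow> mdet B = 1 \<Longrightarrow> moeb (mmul A B) p = moeb A (moeb B p)"
  using moeb_mmul_Mat[of "m11 A" "m22 A" "m12 A" "m21 A" "m11 B" "m22 B" "m12 B" "m21 B" p]
  by (cases A; cases B) (simp add: mmul_def mdet_def)

subsection \<open>Meridians\<close>

definition shift :: "complex \<Rightarrow> cmat" where
  "shift b = Mat 1 b 0 1"

lemma act_eq_shift_one:
  assumes det: "mdet X = 1" and h: "\<And>\<zeta>. act X (\<zeta>, 1) = (\<zeta> + 1, 1)"
  shows "X = shift 1 \<or> X = mneg (shift 1)"
proof -
  obtain a b c d where X: "X = Mat a b c d" by (cases X)
  have den: "(cmod (c * \<zeta> + d))\<^sup>2 + (cmod c)\<^sup>2 = 1" for \<zeta>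
  proof -
    have "snd (act X (\<zeta>, 1)) = 1" using h by simp
    moreover have "(cmod (c * \<zeta> + d))\<^sup>2 + (cmod c)\<^sup>2 > 0"
      using act_denominator_pos[of X 1 \<zeta>] det X by simp
    ultimately show ?thesis by (simp add: act_def X Let_def)
  qed
  have c0: "c = 0"
  proof (rule ccontr)
    assume "c \<noteq> 0"
    from den[of "- d / c"] \<open>c \<noteq> 0\<close> have "(cmod c)\<^sup>2 = 1" by simp
    moreover from den[of 0] have "(cmod d)\<^sup>2 + (cmod c)\<^sup>2 = 1" by simp
    ultimately have "d = 0" by simp
    with den[of 1] \<open>(cmod c)\<^sup>2 = 1\<close> show False by simp
  qed
  with den[of 0] have "cmod d = 1" using power2_eq_1_iff[of "cmod d"] norm_ge_zero[of d] by simp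
  then have dcd: "d * cnj d = 1" using complex_norm_square[of d] by simp
  have hor: "(a * \<zeta> + b) * cnj d = \<zeta> + 1" for \<zeta>
  proof -
    have "fst (act X (\<zeta>, 1)) = \<zeta> + 1" using h by simp
    then show ?thesis using c0 \<open>cmod d = 1\<close> by (simp add: act_def X Let_def)
  qed
  have cancel: "x * cnj d = 1 \<Longrightarrow> x = d" for x
    using dcd by (metis mult.commute mult.left_neutral mult.assoc mult_cancel_right1 mult_zero_left zero_neq_one)
  from hor[of 0] have "b * cnj d = 1" by simp
  then have bd: "b = d" by (rule cancel)
  from hor[of 1] \<open>b * cnj d = 1\<close> have "a * cnj d = 1" by (simp add: algebra_simps)
  then have ad: "a = d" by (rule cancel)
  from det have "d * d = 1" by (simp add: mdet_def X c0 ad)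
  then have "d = 1 \<or> d = -1" by (metis square_eq_1_iff)
  then show ?thesis using ad bd c0 X by (auto simp: shift_def mneg_def)
qed

text \<open>A meridian is only determined up to sign in SL(2,C); its square is not.\<close>
lemma meridian_square_eq:
  assumes dg: "mdet g = 1" and dm: "mdet m = 1"
    and h: "\<And>\<zeta>. act m (coord g \<zeta>) = coord g (\<zeta> + 1)"
  shows "mmul m m = conjm g (shift 2)"
proof -
  define X where "X = mmul (mmul (madj g) m) g"
  have dX: "mdet X = 1" by (simp add: X_def mdet_mmul mdet_madj dg dm)
  have "act X (\<zeta>, 1) = (\<zeta> + 1, 1)" for \<zeta>
  proof -
    have "act X (\<zeta>, 1) = act (madj g) (act m (act g (\<zeta>, 1)))"
      by (simp add: X_def act_mmul mdet_mmul mdet_madj dg dm snd_act_pos)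
    also have "\<dots> = act (madj g) (act g (\<zeta> + 1, 1))" using h by (simp add: coord_def)
    also have "\<dots> = (\<zeta> + 1, 1)" by (simp add: act_madj_act dg)
    finally show ?thesis .
  qed
  then have "X = shift 1 \<or> X = mneg (shift 1)" using act_eq_shift_one dX by blast
  then have XX: "mmul X X = shift 2" by (auto simp: shift_def mneg_def mmul_def)
  have m: "m = conjm g X"
    by (simp add: conjm_def X_def mmul_assoc mmul_madj_cancel dg) (simp add: mmul_assoc[symmetric] mmul_madj_cancel dg)
  show ?thesis
    unfolding m conjm_mmul[OF dg] XX ..
qed

lemma squared_meridian_in_sq_subgroup:
  assumes "cusped_finvol_kleinian \<Gamma>" and "cusp_normalization \<Gamma> g" and "p \<in> parab_pts \<Gamma>"
  shows "conjm (g p) (shift 2) \<in> sq_subgroup \<Gamma>"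
proof -
  from assms(2,3) have d: "mdet (g p) = 1"
    and "\<exists>m\<in>\<Gamma>. \<forall>\<zeta>. act m (coord (g p) \<zeta>) = coord (g p) (\<zeta> + 1)"
    unfolding cusp_normalization_def by blast+
  then obtain m where m: "m \<in> \<Gamma>" "\<And>\<zeta>. act m (coord (g p) \<zeta>) = coord (g p) (\<zeta> + 1)" by blast
  have "mdet m = 1" using assms(1) m(1) by (simp add: cusped_finvol_kleinian_def)
  then have "mmul m m = conjm (g p) (shift 2)" by (rule meridian_square_eq[OF d _ m(2)])
  with sq_subgroup.sq[OF m(1)] show ?thesis by simp
qed

subsection \<open>The intercusp parameter\<close>

lemma snd_coord_Mat: "snd (coord (Mat a b c d) \<zeta>) = 1 / ((cmod (c*\<zeta>+d))\<^sup>2 + (cmod c)\<^sup>2)"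
  by (simp add: coord_def act_def Let_def)

lemma fst_coord_Mat:
  assumes det: "a * d - b * c = 1" and c: "c \<noteq> 0"
  shows "fst (coord (Mat a b c d) \<zeta>) = a/c - cnj (\<zeta> + d/c) / (c\<^sup>2 * (1 + (\<zeta> + d/c) * cnj (\<zeta> + d/c)))"
proof -
  define e where "e = \<zeta> + d/c"
  have z: "\<zeta> = e - d/c" by (simp add: e_def)
  have "1 + e * cnj e = complex_of_real (1 + (cmod e)\<^sup>2)" by (simp add: of_real_cmod_power2 of_real_cmod_mult_self)
  moreover have "1 + (cmod e)\<^sup>2 > 0" by (intro add_pos_nonneg) simp_all
  ultimately have pos: "1 + e * cnj e \<noteq> 0" by (metis of_real_eq_0_iff less_irrefl)
  have cc: "cnj c \<noteq> 0" using c by simp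
  have Y: "(c * \<zeta> + d) * cnj (c * \<zeta> + d) + c * cnj c = c * cnj c * (1 + e * cnj e)"
    unfolding z using c cc by (simp add: field_simps)
  have "(a/c - cnj e / (c\<^sup>2 * q)) * (c * cnj c * q) = a * cnj c * q - cnj e * cnj c / c" if "q \<noteq> 0" for q
    using c that by (simp add: field_simps power2_eq_square)
  then have "(a/c - cnj e / (c\<^sup>2 * (1 + e * cnj e))) * (c * cnj c * (1 + e * cnj e))
      = a * cnj c * (1 + e * cnj e) - cnj e * cnj c / c" using pos by blast
  also have "\<dots> = (a * \<zeta> + b) * cnj (c * \<zeta> + d) + a * cnj c"
    unfolding z using c cc det by (simp add: field_simps)
  finally have num: "(a * \<zeta> + b) * cnj (c * \<zeta> + d) + a * cnj c
      = (a/c - cnj e / (c\<^sup>2 * (1 + e * cnj e))) * (c * cnj c * (1 + e * cnj e))" ..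
  have "fst (coord (Mat a b c d) \<zeta>)
      = ((a * \<zeta> + b) * cnj (c * \<zeta> + d) + a * cnj c) / ((c * \<zeta> + d) * cnj (c * \<zeta> + d) + c * cnj c)"
    by (simp add: coord_def act_def Let_def of_real_cmod_power2 of_real_cmod_mult_self)
  also have "\<dots> = a/c - cnj e / (c\<^sup>2 * (1 + e * cnj e))"
    unfolding num Y using c cc pos by simp
  finally show ?thesis by (simp add: e_def)
qed

lemma snd_coord_le_top:
  assumes c: "c \<noteq> 0"
  shows "snd (coord (Mat a b c d) z) \<le> 1 / (cmod c)\<^sup>2"
    and "snd (coord (Mat a b c d) z) = 1 / (cmod c)\<^sup>2 \<longleftrightarrow> z = - d / c"
proof -
  have cpos: "(cmod c)\<^sup>2 > 0" using c by simp
  have le: "(cmod c)\<^sup>2 \<le> (cmod (c*z+d))\<^sup>2 + (cmod c)\<^sup>2" by simp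
  show "snd (coord (Mat a b c d) z) \<le> 1 / (cmod c)\<^sup>2"
    unfolding snd_coord_Mat using cpos le by (simp add: frac_le)
  have "1 / ((cmod (c*z+d))\<^sup>2 + (cmod c)\<^sup>2) = 1 / (cmod c)\<^sup>2 \<longleftrightarrow> c * z + d = 0"
    by simp
  also have "\<dots> \<longleftrightarrow> z = - d / c" using c by (auto simp: field_simps add_eq_0_iff)
  finally show "snd (coord (Mat a b c d) z) = 1 / (cmod c)\<^sup>2 \<longleftrightarrow> z = - d / c"
    unfolding snd_coord_Mat .
qed

lemma horo_highest_point:
  assumes c: "c \<noteq> 0"
  shows "(THE x. x \<in> horo (Mat a b c d) \<and> (\<forall>y\<in>horo (Mat a b c d). snd y \<le> snd x))
       = coord (Mat a b c d) (- d / c)"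
proof (rule the_equality)
  let ?h = "Mat a b c d"
  have "snd (coord ?h (- d / c)) = 1 / (cmod c)\<^sup>2" using snd_coord_le_top(2)[OF c] by simp
  then show "coord ?h (- d / c) \<in> horo ?h \<and> (\<forall>y\<in>horo ?h. snd y \<le> snd (coord ?h (- d / c)))"
    using snd_coord_le_top(1)[OF c] by (auto simp: horo_def)
  fix x assume x: "x \<in> horo ?h \<and> (\<forall>y\<in>horo ?h. snd y \<le> snd x)"
  then obtain z where z: "x = coord ?h z" by (auto simp: horo_def)
  have "snd (coord ?h (- d / c)) \<le> snd x" using x by (auto simp: horo_def)
  then have "z = - d / c" using snd_coord_le_top[OF c, of a b d] z by (metis antisym)
  then show "x = coord ?h (- d / c)" using z by simp
qed

lemma has_derivative_fst_coord_top:
  assumes det: "a * d - b * c = 1" and c: "c \<noteq> 0"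
  shows "((\<lambda>\<zeta>. fst (coord (Mat a b c d) \<zeta>)) has_derivative (\<lambda>v. - cnj v / c\<^sup>2)) (at (- d / c))"
proof -
  define z0 where "z0 = - d / c"
  have z0d: "z0 + d / c = 0" using c by (simp add: z0_def)
  have d1: "((\<lambda>z. z + d/c) has_derivative (\<lambda>v. v)) (at z0)"
    using has_derivative_add[OF has_derivative_ident has_derivative_const, of "d/c" "at z0"] by simp
  have d2: "((\<lambda>z. cnj (z + d/c)) has_derivative cnj) (at z0)"
    using has_derivative_cnj[OF d1] .
  have d3: "((\<lambda>z. c\<^sup>2 * (1 + (z + d/c) * cnj (z + d/c)))
      has_derivative (\<lambda>v. c\<^sup>2 * (0 + ((z0 + d/c) * cnj v + v * cnj (z0 + d/c))))) (at z0)"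
    using has_derivative_mult_right[OF has_derivative_add[OF has_derivative_const has_derivative_mult[OF d1 d2]]] .
  have nz: "c\<^sup>2 * (1 + (z0 + d/c) * cnj (z0 + d/c)) \<noteq> 0" using c z0d by simp
  have d3': "((\<lambda>z. c\<^sup>2 * (1 + (z + d/c) * cnj (z + d/c))) has_derivative (\<lambda>v. 0)) (at z0)"
    using d3 unfolding z0d by simp
  note quotient = has_derivative_divide[OF d2 d3' nz]
  have "((\<lambda>z. a/c - cnj (z + d/c) / (c\<^sup>2 * (1 + (z + d/c) * cnj (z + d/c)))) has_derivative (\<lambda>v. - cnj v / c\<^sup>2)) (at z0)"
    by (rule has_derivative_eq_rhs[OF has_derivative_diff[OF has_derivative_const quotient]])
      (use c z0d in \<open>simp add: fun_eq_iff power2_eq_square\<close>)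
  then show ?thesis using fst_coord_Mat[OF det c] by (simp add: z0_def)
qed

text \<open>
  The derivative at the top point is v \<mapsto> - cnj v / c^2, so the transported meridian direction is
  v0 = - cnj c^2.  The height of the top point, 1/|c|^2, gives the factor e^-d, and the rotation
  gives sgn v0 = v0/|c|^2; their product is v0/|c|^4 = -1/c^2.
\<close>
lemma intercusp_eq:
  assumes h: "mmul (madj (g p1)) (g p2) = Mat a b c d"
    and det: "a * d - b * c = 1" and c: "c \<noteq> 0"
  shows "intercusp g p1 p2 = - 1 / c\<^sup>2"
proof -
  let ?h = "Mat a b c d"
  have cpos: "(cmod c)\<^sup>2 > 0" using c by simp
  have dh: "mdet ?h = 1" using det by (simp add: mdet_def)
  have top: "snd (coord ?h (- d / c)) = 1 / (cmod c)\<^sup>2" using snd_coord_le_top(2)[OF c] by simp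
  have L: "frechet_derivative (\<lambda>\<zeta>. fst (coord ?h \<zeta>)) (at (- d / c)) = (\<lambda>v. - cnj v / c\<^sup>2)"
    using frechet_derivative_at[OF has_derivative_fst_coord_top[OF det c]] by simp
  define v0 where "v0 = - (cnj c)\<^sup>2"
  have V: "(THE v. - cnj v / c\<^sup>2 = 1) = v0"
  proof (rule the_equality)
    fix v assume "- cnj v / c\<^sup>2 = 1"
    then have "cnj v = - c\<^sup>2" using c by (simp add: field_simps) (metis minus_minus)
    then show "v = v0" unfolding v0_def by (metis complex_cnj_cnj complex_cnj_minus complex_cnj_power)
  qed (use c in \<open>simp add: v0_def\<close>)
  have v00: "v0 \<noteq> 0" using c by (simp add: v0_def)
  have sgn: "sgn v0 = v0 / (c * cnj c)"
    by (simp add: sgn_div_norm v0_def norm_power scaleR_conv_of_real field_simps of_real_cmod_power2 of_real_cmod_mult_self)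
  have "intercusp g p1 p2 = exp (- (complex_of_real (- ln (1 / (cmod c)\<^sup>2)) + \<i> * complex_of_real (- Arg v0)))"
    unfolding intercusp_def Let_def h horo_highest_point[OF c] the_coord_eq[OF dh] L V top ..
  also have "\<dots> = exp (complex_of_real (- ln ((cmod c)\<^sup>2))) * exp (\<i> * complex_of_real (Arg v0))"
    using cpos by (simp add: ln_div exp_add[symmetric])
  also have "\<dots> = complex_of_real (1 / (cmod c)\<^sup>2) * sgn v0"
    using cpos v00 by (simp add: exp_of_real exp_minus inverse_eq_divide cis_conv_exp[symmetric] cis_Arg)
  also have "\<dots> = v0 / (c * cnj c)\<^sup>2"
    unfolding sgn using cpos by (simp add: of_real_cmod_power2 of_real_cmod_mult_self field_simps power2_eq_square)
  also have "\<dots> = - 1 / c\<^sup>2" using c by (simp add: v0_def field_simps power2_eq_square)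
  finally show ?thesis .
qed

subsection \<open>Geodesics and the translation parameter\<close>

lemma geod_sym: "geod p q = geod q p"
  by (cases p; cases q) (auto simp: geod_def closed_segment_commute norm_minus_commute add.commute)

lemma geod_semicircle_iff:
  assumes "p \<noteq> q"
  shows "(z, t) \<in> geod (Some p) (Some q) \<longleftrightarrow>
    t > 0 \<and> (\<exists>u. 0 \<le> u \<and> u \<le> 1 \<and> z = (1 - of_real u) * p + of_real u * q \<and> t\<^sup>2 = u * (1 - u) * (cmod (p - q))\<^sup>2)"
proof -
  have key: "(cmod ((1 - of_real u) * p + of_real u * q - (p + q) / 2))\<^sup>2 + t\<^sup>2 = (cmod (p - q) / 2)\<^sup>2
      \<longleftrightarrow> t\<^sup>2 = u * (1 - u) * (cmod (p - q))\<^sup>2" for u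
  proof -
    have "(1 - of_real u) * p + of_real u * q - (p + q) / 2 = of_real (1/2 - u) * (p - q)"
      by (simp add: field_simps)
    then have "(cmod ((1 - of_real u) * p + of_real u * q - (p + q) / 2))\<^sup>2 = (1/2 - u)\<^sup>2 * (cmod (p - q))\<^sup>2"
      by (simp only: norm_mult norm_of_real power_mult_distrib power2_abs)
    moreover have "(cmod (p - q) / 2)\<^sup>2 - (1/2 - u)\<^sup>2 * (cmod (p - q))\<^sup>2 = u * (1 - u) * (cmod (p - q))\<^sup>2"
      by (simp add: power2_eq_square algebra_simps)
    ultimately show ?thesis by linarith
  qed
  show ?thesis
    unfolding geod_def closed_segment_def by (simp add: scaleR_conv_of_real) (use key in blast)
qed

lemma act_vertical_Mat:
  fixes s :: real
  assumes det: "a * d - b * c = 1" and c: "c \<noteq> 0" and w: "c * x + d \<noteq> 0"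
  defines "D \<equiv> (cmod (c * x + d))\<^sup>2 + (cmod c)\<^sup>2 * s\<^sup>2"
  shows "act (Mat a b c d) (x, s) = ((1 - of_real ((cmod c)\<^sup>2 * s\<^sup>2 / D)) * ((a * x + b) / (c * x + d)) + of_real ((cmod c)\<^sup>2 * s\<^sup>2 / D) * (a / c), s / D)"
proof -
  have D0: "D > 0" unfolding D_def using w by (intro add_pos_nonneg) simp_all
  have "1 - (cmod c)\<^sup>2 * s\<^sup>2 / D = (cmod (c * x + d))\<^sup>2 / D" using D0 by (simp add: D_def field_simps)
  then have e: "1 - of_real ((cmod c)\<^sup>2 * s\<^sup>2 / D) = (complex_of_real ((cmod (c * x + d))\<^sup>2 / D))"
    by (metis of_real_1 of_real_diff)
  have cD: "complex_of_real D \<noteq> 0" using D0 by simp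
  have Dc: "complex_of_real D = (c * x + d) * cnj (c * x + d) + c * cnj c * (of_real s)\<^sup>2"
    by (simp add: D_def of_real_cmod_power2 of_real_cmod_mult_self)
  have f: "fst (act (Mat a b c d) (x, s)) = ((a * x + b) * cnj (c * x + d) + a * cnj c * (of_real s)\<^sup>2) / complex_of_real D"
    by (simp add: act_def Let_def D_def)
  have f2: "complex_of_real ((cmod (c * x + d))\<^sup>2 / D) * ((a * x + b) / (c * x + d)) + of_real ((cmod c)\<^sup>2 * s\<^sup>2 / D) * (a / c)
     = ((a * x + b) * cnj (c * x + d) + a * cnj c * (of_real s)\<^sup>2) / complex_of_real D"
  proof -
    have "complex_of_real ((cmod w)\<^sup>2 / D) * (P / w) + of_real ((cmod c)\<^sup>2 * s\<^sup>2 / D) * (a / c)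
       = (P * cnj w + a * cnj c * (of_real s)\<^sup>2) / complex_of_real D" if "w \<noteq> 0" for P w
      using that c D0 by (simp add: of_real_cmod_power2 of_real_cmod_mult_self field_simps)
    then show ?thesis using w by blast
  qed
  have sn: "snd (act (Mat a b c d) (x, s)) = s / D"
    by (simp add: act_def Let_def D_def)
  have "fst (act (Mat a b c d) (x, s)) = (1 - of_real ((cmod c)\<^sup>2 * s\<^sup>2 / D)) * ((a * x + b) / (c * x + d)) + of_real ((cmod c)\<^sup>2 * s\<^sup>2 / D) * (a / c)"
    unfolding e by (simp only: f f2[symmetric])
  then show ?thesis using sn by (metis prod.collapse)
qed

lemma norm_moeb_diff_pole_Mat:
  fixes a b c d x :: complex
  assumes det: "a * d - b * c = 1" and c: "c \<noteq> 0" and w: "c * x + d \<noteq> 0"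
  shows "(cmod ((a * x + b) / (c * x + d) - a / c))\<^sup>2 = 1 / ((cmod (c * x + d))\<^sup>2 * (cmod c)\<^sup>2)"
proof -
  have "(a*x+b)*c - a*(c*x+d) = -(a*d - b*c)" by (simp add: algebra_simps)
  then have "(a*x+b)*c - a*(c*x+d) = -1" using det by simp
  then have "(a * x + b) / (c * x + d) - a / c = - 1 / ((c * x + d) * c)"
    using c w by (simp add: diff_frac_eq)
  then show ?thesis by (simp add: norm_divide norm_mult power_mult_distrib power_divide)
qed

lemma act_vertical_in_geod_Mat:
  fixes a b c d x :: complex
  assumes det: "a * d - b * c = 1" and c: "c \<noteq> 0" and w: "c * x + d \<noteq> 0" and s: "s > 0"
  defines "p \<equiv> (a * x + b) / (c * x + d)" and "q \<equiv> a / c"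
  shows "act (Mat a b c d) (x, s) \<in> geod (Some p) (Some q)"
proof -
  define W where "W = (cmod (c * x + d))\<^sup>2"
  define C where "C = (cmod c)\<^sup>2"
  define u where "u = C * s\<^sup>2 / (W + C * s\<^sup>2)"
  have W0: "W > 0" using w by (simp add: W_def)
  have C0: "C > 0" using c by (simp add: C_def)
  have K: "(cmod (p - q))\<^sup>2 = 1 / (W * C)"
    unfolding p_def q_def W_def C_def by (rule norm_moeb_diff_pole_Mat[OF det c w])
  then have pq: "p \<noteq> q" using W0 C0 by auto
  have D0: "W + C * s\<^sup>2 > 0" using W0 C0 by (intro add_pos_nonneg) simp_all
  have u1: "1 - u = W / (W + C * s\<^sup>2)" using D0 by (simp add: u_def field_simps)
  have "0 \<le> u" using C0 D0 by (simp add: u_def)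
  moreover have "u \<le> 1" using u1 divide_pos_pos[OF W0 D0] by linarith
  moreover have "(s / (W + C * s\<^sup>2))\<^sup>2 = u * (1 - u) * (cmod (p - q))\<^sup>2"
    unfolding u1 K u_def using W0 C0 D0 by (simp add: field_simps power2_eq_square)
  moreover have "s / (W + C * s\<^sup>2) > 0" using s D0 by simp
  moreover have "act (Mat a b c d) (x, s) = ((1 - of_real u) * p + of_real u * q, s / (W + C * s\<^sup>2))"
    using act_vertical_Mat[OF det c w, of s] unfolding W_def C_def p_def q_def u_def by simp
  ultimately show ?thesis by (simp only: geod_semicircle_iff[OF pq]) blast
qed

text \<open>The height s is recovered from the position u along the semicircle by inverting u = C s^2 / (W + C s^2).\<close>
lemma geod_in_act_vertical_Mat:
  fixes a b c d x :: complex
  assumes det: "a * d - b * c = 1" and c: "c \<noteq> 0" and w: "c * x + d \<noteq> 0"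
    and y: "y \<in> geod (Some ((a * x + b) / (c * x + d))) (Some (a / c))"
  shows "\<exists>s>0. y = act (Mat a b c d) (x, s)"
proof -
  define p where "p = (a * x + b) / (c * x + d)"
  define q where "q = a / c"
  define W where "W = (cmod (c * x + d))\<^sup>2"
  define C where "C = (cmod c)\<^sup>2"
  have W0: "W > 0" using w by (simp add: W_def)
  have C0: "C > 0" using c by (simp add: C_def)
  have K: "(cmod (p - q))\<^sup>2 = 1 / (W * C)"
    unfolding p_def q_def W_def C_def by (rule norm_moeb_diff_pole_Mat[OF det c w])
  then have pq: "p \<noteq> q" using W0 C0 by auto
  obtain z t where yzt: "y = (z, t)" by (cases y)
  have "(z, t) \<in> geod (Some p) (Some q)" using y yzt by (simp add: p_def q_def)
  then obtain u where t: "t > 0" and u: "0 \<le> u" "u \<le> 1" and z: "z = (1 - of_real u) * p + of_real u * q"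
    and t2: "t\<^sup>2 = u * (1 - u) * (cmod (p - q))\<^sup>2"
    unfolding geod_semicircle_iff[OF pq] by blast
  have "u \<noteq> 0" "u \<noteq> 1" using t t2 by auto
  then have u0: "u > 0" and u1: "1 - u > 0" using u by auto
  define s where "s = sqrt (u * W / ((1 - u) * C))"
  have s0: "s > 0" using u0 u1 W0 C0 by (simp add: s_def)
  have s2: "s\<^sup>2 = u * W / ((1 - u) * C)" using u0 u1 W0 C0 by (simp add: s_def)
  have Cs: "C * s\<^sup>2 = u * W / (1 - u)" unfolding s2 using C0 u1 by simp
  have D: "W + C * s\<^sup>2 = W / (1 - u)" unfolding Cs using u1 by (simp add: field_simps)
  have uu: "C * s\<^sup>2 / (W + C * s\<^sup>2) = u" unfolding D unfolding Cs using u1 W0 by simp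
  have "(s / (W + C * s\<^sup>2))\<^sup>2 = s\<^sup>2 / (W / (1 - u))\<^sup>2" unfolding D by (simp add: power_divide power_mult_distrib)
  also have "\<dots> = u * (1 - u) / (W * C)" unfolding s2 using u1 W0 C0 by (simp add: field_simps power2_eq_square)
  also have "\<dots> = t\<^sup>2" unfolding t2 K by simp
  finally have tt: "s / (W + C * s\<^sup>2) = t"
    using t s0 W0 u1 D power2_eq_iff_nonneg[of "s / (W + C * s\<^sup>2)" t] by simp
  have "act (Mat a b c d) (x, s) = ((1 - of_real (C * s\<^sup>2 / (W + C * s\<^sup>2))) * p
      + of_real (C * s\<^sup>2 / (W + C * s\<^sup>2)) * q, s / (W + C * s\<^sup>2))"
    using act_vertical_Mat[OF det c w, of s] unfolding W_def C_def p_def q_def by simp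
  then have "y = act (Mat a b c d) (x, s)" unfolding yzt uu tt z by simp
  then show ?thesis using s0 by blast
qed

lemma act_vertical_geod_upper_triangular:
  fixes a b d x :: complex
  assumes det: "a * d = 1"
  shows "s > 0 \<Longrightarrow> act (Mat a b 0 d) (x, s) \<in> geod (Some ((a * x + b) / d)) None"
    and "y \<in> geod (Some ((a * x + b) / d)) None \<Longrightarrow> \<exists>s>0. y = act (Mat a b 0 d) (x, s)"
proof -
  have d0: "d \<noteq> 0" using det by auto
  have dd: "(cmod d)\<^sup>2 > 0" using d0 by simp
  have actf: "act (Mat a b 0 d) (x, s) = ((a * x + b) / d, s / (cmod d)\<^sup>2)" for s
    using d0 by (simp add: act_def Let_def of_real_cmod_power2 of_real_cmod_mult_self field_simps)
  show "s > 0 \<Longrightarrow> act (Mat a b 0 d) (x, s) \<in> geod (Some ((a * x + b) / d)) None"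
    unfolding actf geod_def using dd by simp
  show "\<exists>s>0. y = act (Mat a b 0 d) (x, s)" if y: "y \<in> geod (Some ((a * x + b) / d)) None"
  proof -
    have "snd y > 0" "fst y = (a * x + b) / d" using y by (auto simp: geod_def)
    then have "y = act (Mat a b 0 d) (x, snd y * (cmod d)\<^sup>2)" unfolding actf using dd by (simp add: prod_eq_iff)
    then show ?thesis using \<open>snd y > 0\<close> dd by (metis mult_pos_pos)
  qed
qed

lemma act_vertical_geod_pole:
  fixes a b c d x :: complex
  assumes c: "c \<noteq> 0" and w: "c * x + d = 0"
  shows "s > 0 \<Longrightarrow> act (Mat a b c d) (x, s) \<in> geod None (Some (a / c))"
    and "y \<in> geod None (Some (a / c)) \<Longrightarrow> \<exists>s>0. y = act (Mat a b c d) (x, s)"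
proof -
  have cc: "(cmod c)\<^sup>2 > 0" using c by simp
  have actf: "s > 0 \<Longrightarrow> act (Mat a b c d) (x, s) = (a / c, 1 / ((cmod c)\<^sup>2 * s))" for s
  proof -
    assume s: "s > 0"
    have dd: "d = - (c * x)" using w by (simp add: eq_neg_iff_add_eq_0 add.commute)
    show ?thesis unfolding dd using c s by (simp add: act_def Let_def of_real_cmod_power2 of_real_cmod_mult_self field_simps power2_eq_square)
  qed
  show "s > 0 \<Longrightarrow> act (Mat a b c d) (x, s) \<in> geod None (Some (a / c))"
    using actf cc by (simp add: geod_def)
  show "\<exists>s>0. y = act (Mat a b c d) (x, s)" if y: "y \<in> geod None (Some (a / c))"
  proof -
    have t: "snd y > 0" "fst y = a / c" using y by (auto simp: geod_def)
    define s where "s = 1 / ((cmod c)\<^sup>2 * snd y)"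
    have s0: "s > 0" using t cc by (simp add: s_def)
    have "1 / ((cmod c)\<^sup>2 * s) = snd y" using t cc by (simp add: s_def)
    then have "y = act (Mat a b c d) (x, s)" using actf[OF s0] t by (simp add: prod_eq_iff)
    then show ?thesis using s0 by blast
  qed
qed

lemma act_vertical_geod:
  assumes det: "mdet g = 1" and ne: "moeb g (Some x) \<noteq> moeb g None"
  shows "s > 0 \<Longrightarrow> act g (x, s) \<in> geod (moeb g (Some x)) (moeb g None)"
    and "y \<in> geod (moeb g (Some x)) (moeb g None) \<Longrightarrow> \<exists>s>0. y = act g (x, s)"
proof -
  obtain a b c d where g: "g = Mat a b c d" by (cases g)
  have det': "a * d - b * c = 1" using det by (simp add: g mdet_def)
  have "(s > 0 \<longrightarrow> act g (x, s) \<in> geod (moeb g (Some x)) (moeb g None)) \<and>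
        (y \<in> geod (moeb g (Some x)) (moeb g None) \<longrightarrow> (\<exists>s>0. y = act g (x, s)))"
  proof (cases "c = 0")
    case True
    then have ad: "a * d = 1" using det' by simp
    then have "d \<noteq> 0" by auto
    then show ?thesis
      using act_vertical_geod_upper_triangular(1)[OF ad, where s=s and b=b and x=x]
        act_vertical_geod_upper_triangular(2)[OF ad, where y=y and b=b and x=x] True
      by (simp add: g)
  next
    case c: False
    show ?thesis
    proof (cases "c * x + d = 0")
      case True
      then show ?thesis
        using act_vertical_geod_pole(1)[OF c True, where s=s and a=a and b=b]
          act_vertical_geod_pole(2)[OF c True, where y=y and a=a and b=b] c
        by (simp add: g geod_sym)
    next
      case False
      then show ?thesis
        using act_vertical_in_geod_Mat[OF det' c False, where s=s]
          geod_in_act_vertical_Mat[OF det' c False, where y=y] c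
        by (simp add: g)
    qed
  qed
  then show "s > 0 \<Longrightarrow> act g (x, s) \<in> geod (moeb g (Some x)) (moeb g None)"
    and "y \<in> geod (moeb g (Some x)) (moeb g None) \<Longrightarrow> \<exists>s>0. y = act g (x, s)" by auto
qed

lemma m21_madj_mmul_ne_zero:
  assumes d1: "mdet g1 = 1" and d2: "mdet g2 = 1" and ne: "moeb g1 None \<noteq> moeb g2 None"
  shows "m21 (mmul (madj g2) g1) \<noteq> 0"
proof
  let ?h = "mmul (madj g2) g1"
  assume "m21 ?h = 0"
  then have "moeb ?h None = None" by (cases ?h) simp
  then have "moeb g1 None = moeb g2 None"
    using moeb_mmul[OF d2, of ?h None] by (simp add: mmul_madj_left_eq d2 mdet_mmul mdet_madj d1)
  with ne show False ..
qed

text \<open>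
  The geodesic from the centre of g1 to the centre of g2 is the image under g2 of the vertical
  line over the point x below, so it meets the horosphere of g2 at the coordinate x.
\<close>
lemma horo_inter_geod_eq:
  assumes d1: "mdet g1 = 1" and d2: "mdet g2 = 1" and ne: "moeb g1 None \<noteq> moeb g2 None"
  defines "h \<equiv> mmul (madj g2) g1"
  shows "(THE y. y \<in> horo g2 \<inter> geod (moeb g1 None) (moeb g2 None)) = coord g2 (m11 h / m21 h)"
proof -
  have dh: "mdet h = 1" by (simp add: h_def mdet_mmul mdet_madj d1 d2)
  have c: "m21 h \<noteq> 0" unfolding h_def by (rule m21_madj_mmul_ne_zero[OF d1 d2 ne])
  define x where "x = m11 h / m21 h"
  have "moeb h None = Some x" using c by (cases h) (simp add: x_def)
  then have p1: "moeb g1 None = moeb g2 (Some x)"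
    using moeb_mmul[OF d2 dh, of None] by (simp add: h_def mmul_madj_left_eq d2)
  have ne2: "moeb g2 (Some x) \<noteq> moeb g2 None" using ne p1 by simp
  have uniq: "z = x" if z: "coord g2 z \<in> geod (moeb g2 (Some x)) (moeb g2 None)" for z
  proof -
    obtain s where s: "s > 0" "coord g2 z = act g2 (x, s)" using act_vertical_geod(2)[OF d2 ne2 z] by blast
    have "(z, 1) = (x, s)" using act_inj[OF d2 _ _ s(2)[unfolded coord_def]] s(1) by simp
    then show ?thesis by simp
  qed
  have "act g2 (x, 1) \<in> geod (moeb g2 (Some x)) (moeb g2 None)" by (rule act_vertical_geod(1)[OF d2 ne2]) simp
  then have "coord g2 x \<in> horo g2 \<inter> geod (moeb g1 None) (moeb g2 None)"
    unfolding p1 horo_def coord_def by blast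
  moreover have "y = coord g2 x" if "y \<in> horo g2 \<inter> geod (moeb g1 None) (moeb g2 None)" for y
    using that uniq unfolding horo_def p1 by blast
  ultimately show ?thesis unfolding x_def by (rule the_equality)
qed

lemma transl_eq:
  assumes d1: "mdet (g p1) = 1" and d2: "mdet (g p2) = 1" and d3: "mdet (g p3) = 1"
    and e1: "moeb (g p1) None = p1" and e2: "moeb (g p2) None = p2" and e3: "moeb (g p3) None = p3"
    and n12: "p1 \<noteq> p2" and n23: "p2 \<noteq> p3"
  defines "h1 \<equiv> mmul (madj (g p2)) (g p1)" and "h3 \<equiv> mmul (madj (g p2)) (g p3)"
  shows "transl g p1 p2 p3 = m11 h3 / m21 h3 - m11 h1 / m21 h1"
proof -
  have "moeb (g p1) None \<noteq> moeb (g p2) None" "moeb (g p3) None \<noteq> moeb (g p2) None"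
    using e1 e2 e3 n12 n23 by simp_all
  from horo_inter_geod_eq[OF d1 d2 this(1)] horo_inter_geod_eq[OF d3 d2 this(2)]
  show ?thesis
    unfolding transl_def Let_def geod_sym[of p2 p3] h1_def h3_def e1 e2 e3 by (simp add: the_coord_eq[OF d2])
qed

subsection \<open>Traces of products of squared meridians\<close>

definition conj_shift2 :: "complex \<Rightarrow> complex \<Rightarrow> cmat" where
  "conj_shift2 a c = Mat (1 - 2*a*c) (2*a\<^sup>2) (-2*c\<^sup>2) (1 + 2*a*c)"

lemma conjm_shift2: "mdet h = 1 \<Longrightarrow> conjm h (shift 2) = conj_shift2 (m11 h) (m21 h)"
  by (cases h) (simp add: conjm_def shift_def conj_shift2_def mmul_def madj_def mdet_def cmat_eq_iff
      power2_eq_square algebra_simps)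

lemma mtrace_shift2_conj_shift2: "mtrace (mmul (shift 2) (conj_shift2 a c)) = 2 - 4 * c\<^sup>2"
  by (simp add: mtrace_def mmul_def shift_def conj_shift2_def power2_eq_square algebra_simps)

lemma mtrace_shift2_conj_shift2_triple:
  "mtrace (mmul (mmul (shift 2) (conj_shift2 a1 c1)) (conj_shift2 a3 c3))
     - mtrace (mmul (shift 2) (conj_shift2 a1 c1)) - mtrace (mmul (shift 2) (conj_shift2 a3 c3))
     - mtrace (mmul (conj_shift2 a1 c1) (conj_shift2 a3 c3)) + 4 = 8 * c1 * c3 * (a3 * c1 - a1 * c3)"
  by (simp add: mtrace_def mmul_def shift_def conj_shift2_def power2_eq_square algebra_simps)

lemma conjm_shift2_relative:
  assumes "mdet g1 = 1" "mdet g2 = 1"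
  shows "conjm g2 (shift 2) = conjm g1 (conj_shift2 (m11 (mmul (madj g1) g2)) (m21 (mmul (madj g1) g2)))"
proof -
  have "mdet (mmul (madj g1) g2) = 1" using assms by (simp add: mdet_mmul mdet_madj)
  then show ?thesis
    using conjm_conjm[of g1 "mmul (madj g1) g2"] by (simp add: mmul_madj_left_eq assms conjm_shift2)
qed

lemma mtrace_squared_meridians:
  assumes d1: "mdet g1 = 1" and d2: "mdet g2 = 1"
  shows "mtrace (mmul (conjm g1 (shift 2)) (conjm g2 (shift 2))) = 2 - 4 * (m21 (mmul (madj g1) g2))\<^sup>2"
  unfolding conjm_shift2_relative[OF d1 d2] conjm_mmul[OF d1] mtrace_conjm[OF d1]
  by (rule mtrace_shift2_conj_shift2)

lemma mtrace_squared_meridians_triple: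
  assumes d1: "mdet g1 = 1" and d2: "mdet g2 = 1" and d3: "mdet g3 = 1"
  defines "M1 \<equiv> conjm g1 (shift 2)" and "M2 \<equiv> conjm g2 (shift 2)" and "M3 \<equiv> conjm g3 (shift 2)"
    and "h1 \<equiv> mmul (madj g2) g1" and "h3 \<equiv> mmul (madj g2) g3"
  shows "mtrace (mmul (mmul M2 M1) M3) - mtrace (mmul M2 M1) - mtrace (mmul M2 M3) - mtrace (mmul M1 M3) + 4
       = 8 * m21 h1 * m21 h3 * (m11 h3 * m21 h1 - m11 h1 * m21 h3)"
  unfolding M1_def M2_def M3_def h1_def h3_def conjm_shift2_relative[OF d2 d1] conjm_shift2_relative[OF d2 d3]
    conjm_mmul[OF d2] mtrace_conjm[OF d2]
  by (rule mtrace_shift2_conj_shift2_triple)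

lemma subfield_add: "is_subfield F \<Longrightarrow> x \<in> F \<Longrightarrow> y \<in> F \<Longrightarrow> x + y \<in> F"
  unfolding is_subfield_def by blast

lemma subfield_mult: "is_subfield F \<Longrightarrow> x \<in> F \<Longrightarrow> y \<in> F \<Longrightarrow> x * y \<in> F"
  unfolding is_subfield_def by blast

lemma subfield_diff: "is_subfield F \<Longrightarrow> x \<in> F \<Longrightarrow> y \<in> F \<Longrightarrow> x - y \<in> F"
  unfolding is_subfield_def by (metis diff_conv_add_uminus)

lemma subfield_divide: "is_subfield F \<Longrightarrow> x \<in> F \<Longrightarrow> y \<in> F \<Longrightarrow> x / y \<in> F"
  unfolding is_subfield_def by (cases "y = 0") (auto simp: divide_inverse)

lemma subfield_uminus: "is_subfield F \<Longrightarrow> x \<in> F \<Longrightarrow> - x \<in> F"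
  unfolding is_subfield_def by blast

lemma subfield_one: "is_subfield F \<Longrightarrow> 1 \<in> F"
  unfolding is_subfield_def by blast

lemma subfield_numeral:
  assumes F: "is_subfield F"
  shows "numeral n \<in> F"
proof (induction n)
  case One
  then show ?case using F by (simp add: is_subfield_def)
next
  case (Bit0 n)
  then show ?case using F unfolding numeral.simps is_subfield_def by blast
next
  case (Bit1 n)
  then show ?case using F unfolding numeral.simps is_subfield_def by blast
qed

lemma is_subfield_inv_trace_field: "is_subfield (inv_trace_field \<Gamma>)"
  unfolding inv_trace_field_def is_subfield_def by auto

lemma mtrace_in_inv_trace_field: "A \<in> sq_subgroup \<Gamma> \<Longrightarrow> mtrace A \<in> inv_trace_field \<Gamma>"
  unfolding inv_trace_field_def by auto

lemma power2_m21_in_inv_trace_field: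
  assumes d1: "mdet g1 = 1" and d2: "mdet g2 = 1"
    and "conjm g1 (shift 2) \<in> sq_subgroup \<Gamma>" and "conjm g2 (shift 2) \<in> sq_subgroup \<Gamma>"
  shows "(m21 (mmul (madj g1) g2))\<^sup>2 \<in> inv_trace_field \<Gamma>"
proof -
  let ?t = "mtrace (mmul (conjm g1 (shift 2)) (conjm g2 (shift 2)))"
  have "?t \<in> inv_trace_field \<Gamma>" using assms(3,4) by (intro mtrace_in_inv_trace_field sq_subgroup.mult)
  then have "(2 - ?t) / 4 \<in> inv_trace_field \<Gamma>"
    by (intro subfield_divide subfield_diff subfield_numeral is_subfield_inv_trace_field)
  then show ?thesis unfolding mtrace_squared_meridians[OF d1 d2] by simp
qed

lemma cusp_normalization_centre:
  assumes "cusp_normalization \<Gamma> g" and "p \<in> parab_pts \<Gamma>"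
  shows "mdet (g p) = 1" and "moeb (g p) None = p"
  using assms unfolding cusp_normalization_def by blast+

lemma intercusp_in_inv_trace_field:
  assumes \<Gamma>: "cusped_finvol_kleinian \<Gamma>" and g: "cusp_normalization \<Gamma> g"
    and p1: "p1 \<in> parab_pts \<Gamma>" and p2: "p2 \<in> parab_pts \<Gamma>" and ne: "p1 \<noteq> p2"
  shows "intercusp g p1 p2 \<in> inv_trace_field \<Gamma>"
proof -
  define h where "h = mmul (madj (g p1)) (g p2)"
  note d1 = cusp_normalization_centre(1)[OF g p1] and d2 = cusp_normalization_centre(1)[OF g p2]
  have c: "m21 h \<noteq> 0"
    unfolding h_def using ne cusp_normalization_centre(2)[OF g] p1 p2
    by (intro m21_madj_mmul_ne_zero d1 d2) auto
  have "mdet h = 1" by (simp add: h_def mdet_mmul mdet_madj d1 d2)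
  then have w: "intercusp g p1 p2 = - 1 / (m21 h)\<^sup>2"
    by (intro intercusp_eq[of g p1 p2 "m11 h" "m12 h" "m21 h" "m22 h"] c) (cases h, simp_all add: h_def mdet_def)
  have "(m21 h)\<^sup>2 \<in> inv_trace_field \<Gamma>"
    unfolding h_def using squared_meridian_in_sq_subgroup[OF \<Gamma> g] p1 p2
    by (intro power2_m21_in_inv_trace_field d1 d2)
  then show ?thesis
    unfolding w by (intro subfield_divide subfield_uminus subfield_one is_subfield_inv_trace_field)
qed

lemma transl_in_inv_trace_field:
  assumes \<Gamma>: "cusped_finvol_kleinian \<Gamma>" and g: "cusp_normalization \<Gamma> g"
    and p: "p1 \<in> parab_pts \<Gamma>" "p2 \<in> parab_pts \<Gamma>" "p3 \<in> parab_pts \<Gamma>"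
    and n12: "p1 \<noteq> p2" and n23: "p2 \<noteq> p3"
  shows "transl g p1 p2 p3 \<in> inv_trace_field \<Gamma>"
proof -
  define h1 where "h1 = mmul (madj (g p2)) (g p1)"
  define h3 where "h3 = mmul (madj (g p2)) (g p3)"
  define M where "M p = conjm (g p) (shift 2)" for p
  note d = cusp_normalization_centre(1)[OF g p(1)] cusp_normalization_centre(1)[OF g p(2)]
    cusp_normalization_centre(1)[OF g p(3)]
  note e = cusp_normalization_centre(2)[OF g p(1)] cusp_normalization_centre(2)[OF g p(2)]
    cusp_normalization_centre(2)[OF g p(3)]
  have M: "M p1 \<in> sq_subgroup \<Gamma>" "M p2 \<in> sq_subgroup \<Gamma>" "M p3 \<in> sq_subgroup \<Gamma>"
    unfolding M_def using squared_meridian_in_sq_subgroup[OF \<Gamma> g] p by auto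
  have c1: "m21 h1 \<noteq> 0" unfolding h1_def using n12 e by (intro m21_madj_mmul_ne_zero d) auto
  have c3: "m21 h3 \<noteq> 0" unfolding h3_def using n23 e by (intro m21_madj_mmul_ne_zero d) auto
  let ?D = "mtrace (mmul (mmul (M p2) (M p1)) (M p3)) - mtrace (mmul (M p2) (M p1))
     - mtrace (mmul (M p2) (M p3)) - mtrace (mmul (M p1) (M p3)) + 4"
  have D: "?D \<in> inv_trace_field \<Gamma>"
    by (intro subfield_add subfield_diff subfield_numeral is_subfield_inv_trace_field
        mtrace_in_inv_trace_field sq_subgroup.mult M)
  have sq1: "(m21 h1)\<^sup>2 \<in> inv_trace_field \<Gamma>"
    unfolding h1_def by (intro power2_m21_in_inv_trace_field d M[unfolded M_def])
  have sq3: "(m21 h3)\<^sup>2 \<in> inv_trace_field \<Gamma>"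
    unfolding h3_def by (intro power2_m21_in_inv_trace_field d M[unfolded M_def])
  have "transl g p1 p2 p3 = m11 h3 / m21 h3 - m11 h1 / m21 h1"
    unfolding h1_def h3_def using d e n12 n23 by (rule transl_eq)
  also have "\<dots> = ?D / (8 * ((m21 h1)\<^sup>2 * (m21 h3)\<^sup>2))"
    unfolding M_def h1_def h3_def mtrace_squared_meridians_triple[OF d]
    using c1 c3 by (simp add: h1_def h3_def field_simps power2_eq_square)
  finally show ?thesis
    by (simp only:) (intro D sq1 sq3 subfield_divide subfield_mult subfield_numeral is_subfield_inv_trace_field)
qed

theorem theorem3p3:
  fixes \<Gamma> :: "cmat set" and g :: "complex option \<Rightarrow> cmat"
  assumes "cusped_finvol_kleinian \<Gamma>"
    and "cusp_normalization \<Gamma> g"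
  shows "(\<forall>p1\<in>parab_pts \<Gamma>. \<forall>p2\<in>parab_pts \<Gamma>. p1 \<noteq> p2 \<longrightarrow>
            intercusp g p1 p2 \<in> inv_trace_field \<Gamma>) \<and>
         (\<forall>p1\<in>parab_pts \<Gamma>. \<forall>p2\<in>parab_pts \<Gamma>. \<forall>p3\<in>parab_pts \<Gamma>.
            p1 \<noteq> p2 \<longrightarrow> p2 \<noteq> p3 \<longrightarrow> transl g p1 p2 p3 \<in> inv_trace_field \<Gamma>)"
proof (intro conjI ballI impI)
  show "intercusp g p1 p2 \<in> inv_trace_field \<Gamma>"
    if "p1 \<in> parab_pts \<Gamma>" "p2 \<in> parab_pts \<Gamma>" "p1 \<noteq> p2" for p1 p2
    using intercusp_in_inv_trace_field[OF assms that] .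
  show "transl g p1 p2 p3 \<in> inv_trace_field \<Gamma>"
    if "p1 \<in> parab_pts \<Gamma>" "p2 \<in> parab_pts \<Gamma>" "p3 \<in> parab_pts \<Gamma>" "p1 \<noteq> p2" "p2 \<noteq> p3"
    for p1 p2 p3
    using transl_in_inv_trace_field[OF assms that] .
qed

end
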